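(* Let $k$ be a field, $V$ a $k$-vector space, $N\geq 2$, $R\subseteq V^{\otimes N}$ a subspace, $A=T(V)/(R)$, and $M$ an $A$-bimodule; let $M^\ast$ and $\eta_p:\mathrm{Hom}_k(M\otimes W_{\nu(p)},k)\to\mathrm{Hom}_k(W_{\nu(p)},M^\ast)$, $\eta_p(\varphi)(x_1\dots x_{\nu(p)})(m)=\varphi(m\otimes x_1\dots x_{\nu(p)})$, be as in the context. Then $\eta$ is compatible with the actions of Koszul cochains with coefficients in $A$: for all $q\ge p\ge 0$, every Koszul $p$-cochain $f:W_{\nu(p)}\to A$ and every $\varphi\in\mathrm{Hom}_k(M\otimes W_{\nu(q-p)},k)$, $$\eta_q\big(\varphi\circ(f\underset{K}{\frown}-)\big)=\eta_{q-p}(\varphi)\underset{K}{\smile}f,\qquad \eta_q\big(\varphi\circ(-\underset{K}{\frown}f)\big)=(-1)^p\,f\underset{K}{\smile}\eta_{q-p}(\varphi),$$ (here $f\underset{K}{\frown}-$ and $-\underset{K}{\frown}f$ are regarded as maps $M\otimes W_{\nu(q)}\to M\otimes W_{\nu(q-p)}$ and cup products take values in $M^\ast\otimes_AA\cong M^\ast\cong A\otimes_AM^\ast$). Equivalently, with graded transposes (for a map $T$ from a degree-$q$ space to a degree-$(q-p)$ space, $T^\ast(\lambda)=(-1)^{p(q-p)}\lambda\circ T$), $\eta_q\circ(f\underset{K}{\frown}-)^\ast=(-1)^{(q-p)p}(-\underset{K}{\smile}f)\circ\eta_{q-p}$ and $\eta_q\circ(-1)^{pq}(-\underset{K}{\frown}f)^\ast=(f\underset{K}{\smile}-)\circ\eta_{q-p}$.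 Consequently the induced isomorphism $H(\eta):H^\bullet(C)\to\mathrm{HK}^\bullet(A,M^\ast)$, with $C=\big(\bigoplus_p(M\otimes W_{\nu(p)})^\ast,\,b_K^\ast\big)$, $b_K^\ast(\phi)=-(-1)^p\phi\circ b_K$, is compatible in the same way with the actions of $\mathrm{HK}^\bullet(A)$, and it is natural in $M$.
   Context: $k$ field, $V$ a $k$-vector space, $N\ge 2$, $R\subseteq V^{\otimes N}$, $A=T(V)/(R)$. $W_0=k$, $W_p=V^{\otimes p}$ ($1\le p\le N-1$), $W_p=\bigcap_{i+N+j=p}V^{\otimes i}\otimes R\otimes V^{\otimes j}$ ($p\ge N$); $\nu(2p')=Np'$, $\nu(2p'+1)=Np'+1$. Elements of $W_p$ are written $x_1\dots x_p$ (a sum of such tensors), with sub-blocks understood as elements of the appropriate $W_r$; $x_i$ act on bimodules via images in $A$. $M^\ast=\mathrm{Hom}_k(M,k)$ has bimodule structure $(a.u.a')(m)=u(a'ma)$. Koszul chain and cochain differentials: chains $M\otimes W_{\nu(q)}$, for $q=2q'+1$: $b_K(m\otimes x_1\dots x_{Nq'+1})=mx_1\otimes x_2\dots x_{Nq'+1}-x_{Nq'+1}m\otimes x_1\dots x_{Nq'}$; for $q=2q'\ge2$: $b_K(m\otimes x_1\dots x_{Nq'})=\sum_{i=0}^{N-1}x_{i+Nq'-N+2}\dots x_{Nq'}mx_1\dots x_i\otimes x_{i+1}\dots x_{i+Nq'-N+1}$. Cochains $\mathrm{Hom}_k(W_{\nu(p)},P)$: for $p=2p'$: $b_K(f)(x_1\dots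 x_{Np'+1})=f(x_1\dots x_{Np'})x_{Np'+1}-x_1f(x_2\dots x_{Np'+1})$; for $p=2p'+1$: $b_K(f)(x_1\dots x_{N(p'+1)})=\sum_{i=0}^{N-1}x_1\dots x_if(x_{i+1}\dots x_{i+Np'+1})x_{i+Np'+2}\dots x_{N(p'+1)}$. $\mathrm{HK}^\bullet(A,P)$ is the cohomology, $\mathrm{HK}^\bullet(A)=\mathrm{HK}^\bullet(A,A)$. Cup product of $f:W_{\nu(p)}\to P$, $g:W_{\nu(q)}\to Q$: if $p,q$ not both odd, $(f\underset{K}{\smile}g)(x_1\dots x_{\nu(p+q)})=f(x_1\dots x_{\nu(p)})\otimes_Ag(x_{\nu(p)+1}\dots x_{\nu(p)+\nu(q)})$; if both odd, $(f\underset{K}{\smile}g)(x_1\dots x_{\nu(p+q)})=-\sum_{0\le i+j\le N-2}x_1\dots x_if(x_{i+1}\dots x_{i+\nu(p)})x_{i+\nu(p)+1}\dots x_{\nu(p)+N-j-2}\otimes_Ag(x_{\nu(p)+N-j-1}\dots x_{\nu(p)+\nu(q)+N-j-2})x_{\nu(p)+\nu(q)+N-j-1}\dots x_{\nu(p)+\nu(q)+N-2}$. Cap products of $f:W_{\nu(p)}\to A$ and $z=m\otimes x_1\dots x_{\nu(q)}$: if $p$ and $q-p$ not both odd, $f\underset{K}{\frown}z=f(x_{\nu(q-p)+1}\dots x_{\nu(q)})m\otimes x_1\dots x_{\nu(q-p)}$, $z\underset{K}{\frown}f=(-1)^{pq}mf(x_1\dots x_{\nu(p)})\otimes x_{\nu(p)+1}\dots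 x_{\nu(q)}$; if $p=2p'+1,q=2q'$: $f\underset{K}{\frown}z=-\sum_{0\le i+j\le N-2}x_{Nq'-Np'-N+i+2}\dots x_{Nq'-Np'-j-1}f(x_{Nq'-Np'-j}\dots x_{Nq'-j})x_{Nq'-j+1}\dots x_{Nq'}mx_1\dots x_i\otimes x_{i+1}\dots x_{i+Nq'-Np'-N+1}$, $z\underset{K}{\frown}f=\sum_{0\le i+j\le N-2}x_{Nq'-j+1}\dots x_{Nq'}mx_1\dots x_if(x_{i+1}\dots x_{Np'+i+1})x_{Np'+i+2}\dots x_{Np'+N-j-1}\otimes x_{Np'+N-j}\dots x_{Nq'-j}$. These products descend to (co)homology classes. *)

theory Defs
  imports Main
begin

text \<open>The k-vector space V is given by a basis indexed by the type 'b
(every vector space has a basis). Then V^{\<otimes>n} is identified with the finitely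
supported functions on words (lists over 'b) of length n; a word is the basis tensor
b_1 \<otimes> ... \<otimes> b_n. Likewise M \<otimes> V^{\<otimes>n} is identified with finitely supported
functions from words of length n to M. The k-algebra A is a ring with a central
structure map \<iota> : k \<rightarrow> A, and gen b is the image of the basis vector b in A.\<close>

definition supp :: "('b list \<Rightarrow> 'c::zero) \<Rightarrow> 'b list set" where
  "supp x = {w. x w \<noteq> 0}"

definition tens :: "nat \<Rightarrow> ('b list \<Rightarrow> 'k::field) set" where
  "tens n = {x. finite (supp x) \<and> (\<forall>w\<in>supp x. length w = n)}"

definition subspace_tens :: "nat \<Rightarrow> ('b list \<Rightarrow> 'k::field) set \<Rightarrow> bool" where
  "subspace_tens N R \<longleftrightarrow> R \<subseteq> tens N \<and> (\<lambda>_. 0) \<in> R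
     \<and> (\<forall>x\<in>R. \<forall>y\<in>R. (\<lambda>w. x w + y w) \<in> R) \<and> (\<forall>c. \<forall>x\<in>R. (\<lambda>w. c * x w) \<in> R)"

definition nu :: "nat \<Rightarrow> nat \<Rightarrow> nat" where
  "nu N p = (if even p then N * (p div 2) else N * (p div 2) + 1)"

text \<open>W_p: V^{\<otimes>p} for p < N, and the intersection of the V^i \<otimes> R \<otimes> V^j (i+N+j=p)
for p \<ge> N (an element lies in V^i \<otimes> R \<otimes> V^j iff all its slices at positions
i+1..i+N, with the outer basis words fixed, lie in R).\<close>
definition Wsp :: "nat \<Rightarrow> ('b list \<Rightarrow> 'k::field) set \<Rightarrow> nat \<Rightarrow> ('b list \<Rightarrow> 'k) set" where
  "Wsp N R p = (if p < N then tens p else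
     {x \<in> tens p. \<forall>i u v. i + N \<le> p \<and> length u = i \<and> length v = p - N - i
        \<longrightarrow> (\<lambda>s. x (u @ s @ v)) \<in> R})"

definition gw :: "('b \<Rightarrow> 'a::monoid_mult) \<Rightarrow> 'b list \<Rightarrow> 'a" where
  "gw gen w = prod_list (map gen w)"

definition kalg :: "('k::field \<Rightarrow> 'a::ring_1) \<Rightarrow> bool" where
  "kalg \<iota> \<longleftrightarrow> (\<forall>c d. \<iota> (c + d) = \<iota> c + \<iota> d) \<and> (\<forall>c d. \<iota> (c * d) = \<iota> c * \<iota> d)
     \<and> \<iota> 1 = 1 \<and> (\<forall>c a. \<iota> c * a = a * \<iota> c)"

definition evalT :: "('k::field \<Rightarrow> 'a::ring_1) \<Rightarrow> ('b \<Rightarrow> 'a) \<Rightarrow> ('b list \<Rightarrow> 'k) \<Rightarrow> 'a" where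
  "evalT \<iota> gen x = (\<Sum>w\<in>supp x. \<iota> (x w) * gw gen w)"

text \<open>u \<otimes> r \<otimes> v for basis words u, v and r \<in> V^{\<otimes>N}\<close>
definition ins :: "nat \<Rightarrow> 'b list \<Rightarrow> ('b list \<Rightarrow> 'k::field) \<Rightarrow> 'b list \<Rightarrow> 'b list \<Rightarrow> 'k" where
  "ins N u r v w = (if length w = length u + N + length v \<and> take (length u) w = u
       \<and> drop (length u + N) w = v then r (take N (drop (length u) w)) else 0)"

definition ideal_gen :: "nat \<Rightarrow> ('b list \<Rightarrow> 'k::field) set \<Rightarrow> ('b list \<Rightarrow> 'k) set" where
  "ideal_gen N R = {x. \<exists>L. (\<forall>(u, r, v)\<in>set L. r \<in> R)
       \<and> x = (\<lambda>w. \<Sum>(u, r, v)\<leftarrow>L. ins N u r v w)}"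

text \<open>A = T(V)/(R): the canonical map T(V) \<rightarrow> A is onto with kernel (R)\<close>
definition presents :: "nat \<Rightarrow> ('b list \<Rightarrow> 'k::field) set \<Rightarrow> ('k \<Rightarrow> 'a::ring_1) \<Rightarrow> ('b \<Rightarrow> 'a) \<Rightarrow> bool" where
  "presents N R \<iota> gen \<longleftrightarrow> kalg \<iota>
     \<and> (\<forall>a. \<exists>x. finite (supp x) \<and> evalT \<iota> gen x = a)
     \<and> (\<forall>x. finite (supp x) \<longrightarrow> (evalT \<iota> gen x = 0 \<longleftrightarrow> x \<in> ideal_gen N R))"

definition bimod :: "('k::field \<Rightarrow> 'a::ring_1) \<Rightarrow> ('a \<Rightarrow> 'm::ab_group_add \<Rightarrow> 'm) \<Rightarrow> ('m \<Rightarrow> 'a \<Rightarrow> 'm) \<Rightarrow> bool" where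
  "bimod \<iota> lm rm \<longleftrightarrow>
     (\<forall>m. lm 1 m = m) \<and> (\<forall>a b m. lm (a * b) m = lm a (lm b m))
   \<and> (\<forall>a b m. lm (a + b) m = lm a m + lm b m) \<and> (\<forall>a m n. lm a (m + n) = lm a m + lm a n)
   \<and> (\<forall>m. rm m 1 = m) \<and> (\<forall>a b m. rm m (a * b) = rm (rm m a) b)
   \<and> (\<forall>a b m. rm m (a + b) = rm m a + rm m b) \<and> (\<forall>a m n. rm (m + n) a = rm m a + rm n a)
   \<and> (\<forall>a b m. rm (lm a m) b = lm a (rm m b))
   \<and> (\<forall>c m. lm (\<iota> c) m = rm m (\<iota> c))"

definition lin_A :: "('k::field \<Rightarrow> 'a::ring_1) \<Rightarrow> ('b list \<Rightarrow> 'k) set \<Rightarrow> (('b list \<Rightarrow> 'k) \<Rightarrow> 'a) \<Rightarrow> bool" where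
  "lin_A \<iota> S f \<longleftrightarrow> (\<forall>x\<in>S. \<forall>y\<in>S. f (\<lambda>w. x w + y w) = f x + f y)
     \<and> (\<forall>c. \<forall>x\<in>S. f (\<lambda>w. c * x w) = \<iota> c * f x)"

definition mt :: "('k::field \<Rightarrow> 'a::ring_1) \<Rightarrow> ('a \<Rightarrow> 'm::ab_group_add \<Rightarrow> 'm) \<Rightarrow> 'm \<Rightarrow> ('b list \<Rightarrow> 'k) \<Rightarrow> 'b list \<Rightarrow> 'm" where
  "mt \<iota> lm m x = (\<lambda>w. lm (\<iota> (x w)) m)"

definition MT :: "('k::field \<Rightarrow> 'a::ring_1) \<Rightarrow> ('a \<Rightarrow> 'm::ab_group_add \<Rightarrow> 'm) \<Rightarrow> ('b list \<Rightarrow> 'k) set \<Rightarrow> ('b list \<Rightarrow> 'm) set" where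
  "MT \<iota> lm S = {z. \<exists>L. (\<forall>(m, x)\<in>set L. x \<in> S) \<and> z = (\<lambda>w. \<Sum>(m, x)\<leftarrow>L. mt \<iota> lm m x w)}"

definition lin_Mk :: "('k::field \<Rightarrow> 'a::ring_1) \<Rightarrow> ('a \<Rightarrow> 'm::ab_group_add \<Rightarrow> 'm) \<Rightarrow> ('b list \<Rightarrow> 'm) set \<Rightarrow> (('b list \<Rightarrow> 'm) \<Rightarrow> 'k) \<Rightarrow> bool" where
  "lin_Mk \<iota> lm S \<phi> \<longleftrightarrow> (\<forall>z\<in>S. \<forall>z'\<in>S. \<phi> (\<lambda>w. z w + z' w) = \<phi> z + \<phi> z')
     \<and> (\<forall>c. \<forall>z\<in>S. \<phi> (\<lambda>w. lm (\<iota> c) (z w)) = c * \<phi> z)"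

text \<open>eta(\<phi>)(x)(m) = \<phi>(m \<otimes> x); M^* is represented by functions 'm \<Rightarrow> 'k\<close>
definition eta :: "('k::field \<Rightarrow> 'a::ring_1) \<Rightarrow> ('a \<Rightarrow> 'm::ab_group_add \<Rightarrow> 'm) \<Rightarrow> (('b list \<Rightarrow> 'm) \<Rightarrow> 'k) \<Rightarrow> ('b list \<Rightarrow> 'k) \<Rightarrow> 'm \<Rightarrow> 'k" where
  "eta \<iota> lm \<phi> x m = \<phi> (mt \<iota> lm m x)"

definition negp :: "nat \<Rightarrow> 'c::uminus \<Rightarrow> 'c" where
  "negp n v = (if even n then v else - v)"

definition outer3 :: "('b list \<Rightarrow> 'k::zero) \<Rightarrow> nat \<Rightarrow> nat \<Rightarrow> nat \<Rightarrow> nat \<Rightarrow> ('b list \<times> 'b list \<times> 'b list) set" where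
  "outer3 x i l c j = (\<lambda>w. (take i w, take c (drop (i + l) w), drop (length w - j) w)) ` supp x"

text \<open>Contraction of a bilinear \<beta> on Sa \<times> Sb with an element y of Sa \<otimes> Sb \<subseteq> V^{\<otimes>la} \<otimes> V^{\<otimes>lb}:
 pick a representation y = \<Sum> h_k \<otimes> t_k with h_k \<in> Sa, t_k \<in> Sb and return \<Sum> \<beta> h_k t_k.\<close>
definition contract2 :: "nat \<Rightarrow> ('b list \<Rightarrow> 'k::field) set \<Rightarrow> ('b list \<Rightarrow> 'k) set
    \<Rightarrow> (('b list \<Rightarrow> 'k) \<Rightarrow> ('b list \<Rightarrow> 'k) \<Rightarrow> 'k) \<Rightarrow> ('b list \<Rightarrow> 'k) \<Rightarrow> 'k" where
  "contract2 la Sa Sb \<beta> y = (let L = (SOME L. (\<forall>(h, t)\<in>set L. h \<in> Sa \<and> t \<in> Sb)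
        \<and> y = (\<lambda>w. \<Sum>(h, t)\<leftarrow>L. h (take la w) * t (drop la w)))
     in \<Sum>(h, t)\<leftarrow>L. \<beta> h t)"

definition capL :: "nat \<Rightarrow> ('a::ring_1 \<Rightarrow> 'm::ab_group_add \<Rightarrow> 'm) \<Rightarrow> ('m \<Rightarrow> 'a \<Rightarrow> 'm) \<Rightarrow> ('b \<Rightarrow> 'a)
    \<Rightarrow> (('b list \<Rightarrow> 'k::field) \<Rightarrow> 'a) \<Rightarrow> nat \<Rightarrow> nat \<Rightarrow> 'm \<Rightarrow> ('b list \<Rightarrow> 'k) \<Rightarrow> 'b list \<Rightarrow> 'm" where
  "capL N lm rm gen f p q m x = (\<lambda>e. if length e \<noteq> nu N (q - p) then 0
     else if \<not> (odd p \<and> odd (q - p)) then lm (f (\<lambda>s. x (e @ s))) m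
     else - (\<Sum>(i, j)\<in>{(i, j). i + j \<le> N - 2}.
              \<Sum>(I, C, J)\<in>outer3 x i (nu N (q - p)) (N - j - 2 - i) j.
                lm (gw gen C * f (\<lambda>s. x (I @ e @ C @ s @ J)) * gw gen J) (rm m (gw gen I))))"

definition capR :: "nat \<Rightarrow> ('a::ring_1 \<Rightarrow> 'm::ab_group_add \<Rightarrow> 'm) \<Rightarrow> ('m \<Rightarrow> 'a \<Rightarrow> 'm) \<Rightarrow> ('b \<Rightarrow> 'a)
    \<Rightarrow> (('b list \<Rightarrow> 'k::field) \<Rightarrow> 'a) \<Rightarrow> nat \<Rightarrow> nat \<Rightarrow> 'm \<Rightarrow> ('b list \<Rightarrow> 'k) \<Rightarrow> 'b list \<Rightarrow> 'm" where
  "capR N lm rm gen f p q m x = (\<lambda>e. if length e \<noteq> nu N (q - p) then 0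
     else if \<not> (odd p \<and> odd (q - p)) then negp (p * q) (rm m (f (\<lambda>s. x (s @ e))))
     else (\<Sum>(i, j)\<in>{(i, j). i + j \<le> N - 2}.
              \<Sum>(I, C, J)\<in>outer3 x i (nu N p) (N - j - 2 - i) j.
                lm (gw gen J) (rm m (gw gen I * f (\<lambda>s. x (I @ s @ C @ e @ J)) * gw gen C))))"

text \<open>The bimodule structure of M^* is (a.u.a')(m) = u(a' m a).\<close>
definition cupMA :: "nat \<Rightarrow> ('b list \<Rightarrow> 'k::field) set \<Rightarrow> ('a::ring_1 \<Rightarrow> 'm::ab_group_add \<Rightarrow> 'm) \<Rightarrow> ('m \<Rightarrow> 'a \<Rightarrow> 'm)
    \<Rightarrow> ('b \<Rightarrow> 'a) \<Rightarrow> (('b list \<Rightarrow> 'k) \<Rightarrow> 'm \<Rightarrow> 'k) \<Rightarrow> nat \<Rightarrow> (('b list \<Rightarrow> 'k) \<Rightarrow> 'a) \<Rightarrow> nat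
    \<Rightarrow> ('b list \<Rightarrow> 'k) \<Rightarrow> 'm \<Rightarrow> 'k" where
  "cupMA N R lm rm gen u a g b x m = (let la = nu N a; Sa = Wsp N R la; Sb = Wsp N R (nu N b) in
     if \<not> (odd a \<and> odd b) then contract2 la Sa Sb (\<lambda>h t. u h (lm (g t) m)) x
     else - (\<Sum>(i, j)\<in>{(i, j). i + j \<le> N - 2}.
              \<Sum>(I, C, E)\<in>outer3 x i la (N - j - 2 - i) j.
                contract2 la Sa Sb (\<lambda>h t. u h (lm (gw gen C * g t * gw gen E) (rm m (gw gen I))))
                  (\<lambda>s. x (I @ take la s @ C @ drop la s @ E))))"

definition cupAM :: "nat \<Rightarrow> ('b list \<Rightarrow> 'k::field) set \<Rightarrow> ('a::ring_1 \<Rightarrow> 'm::ab_group_add \<Rightarrow> 'm) \<Rightarrow> ('m \<Rightarrow> 'a \<Rightarrow> 'm)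
    \<Rightarrow> ('b \<Rightarrow> 'a) \<Rightarrow> (('b list \<Rightarrow> 'k) \<Rightarrow> 'a) \<Rightarrow> nat \<Rightarrow> (('b list \<Rightarrow> 'k) \<Rightarrow> 'm \<Rightarrow> 'k) \<Rightarrow> nat
    \<Rightarrow> ('b list \<Rightarrow> 'k) \<Rightarrow> 'm \<Rightarrow> 'k" where
  "cupAM N R lm rm gen g a u b x m = (let la = nu N a; Sa = Wsp N R la; Sb = Wsp N R (nu N b) in
     if \<not> (odd a \<and> odd b) then contract2 la Sa Sb (\<lambda>h t. u t (rm m (g h))) x
     else - (\<Sum>(i, j)\<in>{(i, j). i + j \<le> N - 2}.
              \<Sum>(I, C, E)\<in>outer3 x i la (N - j - 2 - i) j.
                contract2 la Sa Sb (\<lambda>h t. u t (lm (gw gen E) (rm m (gw gen I * g h * gw gen C))))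
                  (\<lambda>s. x (I @ take la s @ C @ drop la s @ E))))"

end

theory Submission
  imports Defs
begin

(* The cap product only evaluates f on slices of x, whereas the
   cup product with eta(phi) is computed (by contract2) from some decomposition
   sum_k h_k (x) t_k of a slice of x with h_k, t_k in the relevant W's.  Such decompositions
   exist by Gaussian elimination: read as a finitely supported matrix, the slice has all its
   rows and columns in the W's.  For ANY such decomposition, linearity of phi and of the
   coefficient map F gives
     sum_k eta(phi)(h_k)(F t_k) = phi (sum_k h_k (x) F t_k) = phi (e |-> F (slice of x at e)),
   which is the cap side; so the choice made by contract2 does not matter.  As for signs,
   (-1)^(pq) = (-1)^p when q - p is even, and when p and q - p are both odd the signs of the
   two odd-odd formulas match. *)

definition fun_subspace :: "('i \<Rightarrow> 'k::field) set \<Rightarrow> bool" where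
  "fun_subspace S \<longleftrightarrow> (\<lambda>_. 0) \<in> S \<and> (\<forall>x\<in>S. \<forall>y\<in>S. (\<lambda>w. x w + y w) \<in> S)
     \<and> (\<forall>c. \<forall>x\<in>S. (\<lambda>w. c * x w) \<in> S)"

lemma fun_subspaceI:
  assumes "(\<lambda>_. 0) \<in> S" "\<And>x y c. x \<in> S \<Longrightarrow> y \<in> S \<Longrightarrow> (\<lambda>w. x w + c * y w) \<in> S"
  shows "fun_subspace S"
  unfolding fun_subspace_def using assms(1) assms(2)[of _ _ 1] assms(2)[of "\<lambda>_. 0"] by simp

lemma fun_subspace_zero: "fun_subspace S \<Longrightarrow> (\<lambda>_. 0) \<in> S"
  unfolding fun_subspace_def by blast

lemma fun_subspace_lincomb:
  assumes "fun_subspace S" "x \<in> S" "y \<in> S"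
  shows "(\<lambda>w. x w + c * y w) \<in> S"
proof -
  have "(\<lambda>w. c * y w) \<in> S" using assms unfolding fun_subspace_def by blast
  with assms show ?thesis unfolding fun_subspace_def by fastforce
qed

lemma fun_subspace_sum_list:
  assumes "fun_subspace S" "\<forall>a\<in>set L. r a \<in> S"
  shows "(\<lambda>w. \<Sum>a\<leftarrow>L. c a * r a w) \<in> S"
  using assms(2)
proof (induction L)
  case Nil
  then show ?case using assms(1) by (simp add: fun_subspace_def)
next
  case (Cons a L)
  then have "(\<lambda>w. (\<Sum>a\<leftarrow>L. c a * r a w) + c a * r a w) \<in> S"
    using fun_subspace_lincomb[OF assms(1)] by simp
  then show ?case by (simp add: add.commute)
qed

lemma tens_eq_0: "x \<in> tens n \<Longrightarrow> length w \<noteq> n \<Longrightarrow> x w = 0"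
  unfolding tens_def supp_def by auto

lemma tens_subspace: "fun_subspace (tens n :: ('b list \<Rightarrow> 'k::field) set)"
proof (rule fun_subspaceI)
  show "(\<lambda>_. 0) \<in> tens n" by (simp add: tens_def supp_def)
next
  fix x y :: "'b list \<Rightarrow> 'k" and c
  assume "x \<in> tens n" "y \<in> tens n"
  moreover have "supp (\<lambda>w. x w + c * y w) \<subseteq> supp x \<union> supp y"
    unfolding supp_def by auto
  ultimately show "(\<lambda>w. x w + c * y w) \<in> tens n"
    unfolding tens_def by (auto dest: finite_subset)
qed

lemma Wsp_subset_tens: "Wsp N R n \<subseteq> tens n"
  unfolding Wsp_def by auto

lemma Wsp_subspace:
  assumes "subspace_tens N R"
  shows "fun_subspace (Wsp N R n)"
proof (cases "n < N")
  case True
  then show ?thesis by (simp add: Wsp_def tens_subspace)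
next
  case False
  have R: "fun_subspace R" using assms unfolding subspace_tens_def fun_subspace_def by blast
  show ?thesis
  proof (rule fun_subspaceI)
    show "(\<lambda>_. 0) \<in> Wsp N R n"
      using False fun_subspace_zero[OF R] fun_subspace_zero[OF tens_subspace] by (simp add: Wsp_def)
  next
    fix x y c assume "x \<in> Wsp N R n" "y \<in> Wsp N R n"
    then show "(\<lambda>w. x w + c * y w) \<in> Wsp N R n"
      using False fun_subspace_lincomb[OF tens_subspace] fun_subspace_lincomb[OF R]
      by (auto simp: Wsp_def)
  qed
qed

lemma Wsp_slice:
  assumes x: "x \<in> Wsp N R n" and len: "length P + l + length Q = n"
  shows "(\<lambda>s. x (P @ s @ Q)) \<in> Wsp N R l"
proof -
  have xt: "x \<in> tens n" using x Wsp_subset_tens by blast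
  have "supp (\<lambda>s. x (P @ s @ Q)) = (\<lambda>s. P @ s @ Q) -` supp x" by (auto simp: supp_def)
  moreover have "finite ((\<lambda>s. P @ s @ Q) -` supp x)"
    using xt unfolding tens_def by (intro finite_vimageI) (auto simp: inj_on_def)
  ultimately have t: "(\<lambda>s. x (P @ s @ Q)) \<in> tens l"
    using xt len unfolding tens_def by (auto simp: supp_def)
  show ?thesis
  proof (cases "l < N")
    case True
    with t show ?thesis by (simp add: Wsp_def)
  next
    case False
    have "(\<lambda>s. x ((P @ u) @ s @ (v @ Q))) \<in> R"
      if "i + N \<le> l" "length u = i" "length v = l - N - i" for i u v
      using x False len that unfolding Wsp_def by (auto simp del: append_assoc)
    with t False show ?thesis by (auto simp: Wsp_def)
  qed
qed

section \<open>Slices of elements of W as sums of tensors\<close>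

lemma rank_one_elimination:
  fixes z :: "'u \<Rightarrow> 'v \<Rightarrow> 'k::field"
  assumes Sa: "fun_subspace Sa" and Sb: "fun_subspace Sb"
    and rows: "\<forall>u. z u \<in> Sb" and cols: "\<forall>v. (\<lambda>u. z u v) \<in> Sa" and "z u0 \<noteq> (\<lambda>_. 0)"
  obtains h t where "h \<in> Sa" "t \<in> Sb"
    "\<forall>u. (\<lambda>v. z u v - h u * t v) \<in> Sb" "\<forall>v. (\<lambda>u. z u v - h u * t v) \<in> Sa"
    "{u. (\<lambda>v. z u v - h u * t v) \<noteq> (\<lambda>_. 0)} \<subseteq> {u. z u \<noteq> (\<lambda>_. 0)} - {u0}"
proof -
  obtain v0 where v0: "z u0 v0 \<noteq> 0" using \<open>z u0 \<noteq> (\<lambda>_. 0)\<close> by blast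
  define h where "h = (\<lambda>u. z u v0 / z u0 v0)"
  show ?thesis
  proof (rule that)
    show "h \<in> Sa"
      using fun_subspace_lincomb[OF Sa fun_subspace_zero[OF Sa], of "\<lambda>u. z u v0" "1 / z u0 v0"] cols
      by (simp add: h_def)
    show "z u0 \<in> Sb" using rows by blast
    show "\<forall>u. (\<lambda>v. z u v - h u * z u0 v) \<in> Sb"
      using fun_subspace_lincomb[OF Sb, of "z _" "z u0" "- h _"] rows by simp
    show "\<forall>v. (\<lambda>u. z u v - h u * z u0 v) \<in> Sa"
    proof
      fix v
      have "(\<lambda>u. z u v + (- z u0 v / z u0 v0) * z u v0) \<in> Sa"
        using fun_subspace_lincomb[OF Sa] cols by blast
      then show "(\<lambda>u. z u v - h u * z u0 v) \<in> Sa" by (simp add: h_def field_simps)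
    qed
    show "{u. (\<lambda>v. z u v - h u * z u0 v) \<noteq> (\<lambda>_. 0)} \<subseteq> {u. z u \<noteq> (\<lambda>_. 0)} - {u0}"
      using v0 by (auto simp: h_def fun_eq_iff) (metis div_0 mult_zero_left)
  qed
qed

lemma finite_rank_decomposition:
  fixes z :: "'u \<Rightarrow> 'v \<Rightarrow> 'k::field"
  assumes Sa: "fun_subspace Sa" and Sb: "fun_subspace Sb"
    and "finite {u. z u \<noteq> (\<lambda>_. 0)}" and "\<forall>u. z u \<in> Sb" and "\<forall>v. (\<lambda>u. z u v) \<in> Sa"
  shows "\<exists>L. (\<forall>(h, t)\<in>set L. h \<in> Sa \<and> t \<in> Sb) \<and> (\<forall>u v. z u v = (\<Sum>(h, t)\<leftarrow>L. h u * t v))"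
  using assms(3-5)
proof (induction "card {u. z u \<noteq> (\<lambda>_. 0)}" arbitrary: z rule: less_induct)
  case less
  show ?case
  proof (cases "\<exists>u0. z u0 \<noteq> (\<lambda>_. 0)")
    case False
    then show ?thesis by (intro exI[of _ "[]"]) (simp add: fun_eq_iff)
  next
    case True
    then obtain u0 where u0: "z u0 \<noteq> (\<lambda>_. 0)" by blast
    obtain h t where ht: "h \<in> Sa" "t \<in> Sb"
      and rows: "\<forall>u. (\<lambda>v. z u v - h u * t v) \<in> Sb" and cols: "\<forall>v. (\<lambda>u. z u v - h u * t v) \<in> Sa"
      and fewer: "{u. (\<lambda>v. z u v - h u * t v) \<noteq> (\<lambda>_. 0)} \<subseteq> {u. z u \<noteq> (\<lambda>_. 0)} - {u0}"
      using rank_one_elimination[OF Sa Sb less.prems(2,3) u0] by blast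
    have "card {u. (\<lambda>v. z u v - h u * t v) \<noteq> (\<lambda>_. 0)} \<le> card ({u. z u \<noteq> (\<lambda>_. 0)} - {u0})"
      using fewer less.prems(1) by (intro card_mono) auto
    also have "\<dots> < card {u. z u \<noteq> (\<lambda>_. 0)}"
      using less.prems(1) u0 by (intro card_Diff1_less) auto
    finally have "card {u. (\<lambda>v. z u v - h u * t v) \<noteq> (\<lambda>_. 0)} < card {u. z u \<noteq> (\<lambda>_. 0)}" .
    moreover have "finite {u. (\<lambda>v. z u v - h u * t v) \<noteq> (\<lambda>_. 0)}"
      using fewer less.prems(1) finite_subset by blast
    ultimately obtain L where L: "\<forall>(h, t)\<in>set L. h \<in> Sa \<and> t \<in> Sb"
      and z': "\<forall>u v. z u v - h u * t v = (\<Sum>(h, t)\<leftarrow>L. h u * t v)"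
      using less.hyps[of "\<lambda>u v. z u v - h u * t v"] rows cols by blast
    have "z u v = (\<Sum>(h, t)\<leftarrow>(h, t) # L. h u * t v)" for u v
      using z' by (simp add: diff_eq_eq add.commute)
    with ht L show ?thesis by (intro exI[of _ "(h, t) # L"]) auto
  qed
qed

lemma Wsp_slice_decomposition:
  assumes SR: "subspace_tens N R" and x: "x \<in> Wsp N R n"
    and len: "length I + la + length C + lb + length J = n"
  shows "\<exists>L. (\<forall>(h, t)\<in>set L. h \<in> Wsp N R la \<and> t \<in> Wsp N R lb) \<and>
     (\<lambda>s. x (I @ take la s @ C @ drop la s @ J)) = (\<lambda>w. \<Sum>(h, t)\<leftarrow>L. h (take la w) * t (drop la w))"
proof -
  have xt: "x \<in> tens n" using x Wsp_subset_tens by blast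
  \<comment> \<open>the cut-off at \<open>length u = la\<close> is what puts every row of \<open>z\<close> into \<open>W_lb\<close>\<close>
  define z where "z u v = (if length u = la then x (I @ u @ C @ v @ J) else 0)" for u v
  have "z u \<in> Wsp N R lb" for u
    using Wsp_slice[OF x, of "I @ u @ C" lb J] len fun_subspace_zero[OF Wsp_subspace[OF SR]]
    by (cases "length u = la") (simp_all add: z_def[abs_def])
  moreover have "(\<lambda>u. z u v) \<in> Wsp N R la" for v
  proof (cases "length v = lb")
    case True
    then have "(\<lambda>u. z u v) = (\<lambda>u. x (I @ u @ C @ v @ J))"
      using len tens_eq_0[OF xt] by (auto simp: z_def)
    with True show ?thesis using Wsp_slice[OF x, of I la "C @ v @ J"] len by simp
  next
    case False
    then have "(\<lambda>u. z u v) = (\<lambda>_. 0)"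
      using len tens_eq_0[OF xt] by (auto simp: z_def)
    then show ?thesis using fun_subspace_zero[OF Wsp_subspace[OF SR]] by simp
  qed
  moreover have "finite {u. z u \<noteq> (\<lambda>_. 0)}"
  proof (rule finite_subset)
    show "{u. z u \<noteq> (\<lambda>_. 0)} \<subseteq> (\<lambda>w. take la (drop (length I) w)) ` supp x"
      by (auto simp: z_def supp_def fun_eq_iff split: if_splits intro!: image_eqI)
    show "finite ((\<lambda>w. take la (drop (length I) w)) ` supp x)"
      using xt by (simp add: tens_def)
  qed
  ultimately obtain L where "\<forall>(h, t)\<in>set L. h \<in> Wsp N R la \<and> t \<in> Wsp N R lb"
    and "\<forall>u v. z u v = (\<Sum>(h, t)\<leftarrow>L. h u * t v)"
    using finite_rank_decomposition[OF Wsp_subspace[OF SR] Wsp_subspace[OF SR]] by blast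
  moreover have "x (I @ take la w @ C @ drop la w @ J) = z (take la w) (drop la w)" for w
    using len tens_eq_0[OF xt] by (auto simp: z_def)
  ultimately show ?thesis by auto
qed

lemma kalg_zero:
  assumes "kalg \<iota>" shows "\<iota> 0 = 0"
proof -
  have "\<iota> (0 + 0) = \<iota> 0 + \<iota> 0" using assms unfolding kalg_def by blast
  then show ?thesis by simp
qed

lemma kalg_minus_one:
  assumes "kalg \<iota>" shows "\<iota> (- 1) = - 1"
proof -
  have "\<iota> (1 + - 1) = \<iota> 1 + \<iota> (- 1)" "\<iota> 1 = 1" using assms unfolding kalg_def by blast+
  then show ?thesis using kalg_zero[OF assms] by (simp add: eq_neg_iff_add_eq_0 add.commute)
qed

lemma bimod_lm_add: "bimod \<iota> lm rm \<Longrightarrow> lm (a + b) m = lm a m + lm b m"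
  by (simp add: bimod_def)

lemma bimod_lm_one: "bimod \<iota> lm rm \<Longrightarrow> lm 1 m = m"
  by (simp add: bimod_def)

lemma bimod_lm_zero:
  assumes "bimod \<iota> lm rm" shows "lm 0 v = 0"
  using bimod_lm_add[OF assms, of 0 0 v] by simp

lemma bimod_lm_minus_one:
  assumes "bimod \<iota> lm rm" shows "lm (- 1) v = - v"
  using bimod_lm_add[OF assms, of 1 "- 1" v] assms bimod_lm_zero[OF assms]
  by (simp add: bimod_def eq_neg_iff_add_eq_0 add.commute)

definition lin_M :: "('k::field \<Rightarrow> 'a::ring_1) \<Rightarrow> ('a \<Rightarrow> 'm::ab_group_add \<Rightarrow> 'm)
    \<Rightarrow> ('b list \<Rightarrow> 'k) set \<Rightarrow> (('b list \<Rightarrow> 'k) \<Rightarrow> 'm) \<Rightarrow> bool" where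
  "lin_M \<iota> lm S F \<longleftrightarrow> (\<forall>x\<in>S. \<forall>y\<in>S. F (\<lambda>w. x w + y w) = F x + F y)
     \<and> (\<forall>c. \<forall>x\<in>S. F (\<lambda>w. c * x w) = lm (\<iota> c) (F x))"

lemma lin_M_add: "lin_M \<iota> lm S F \<Longrightarrow> x \<in> S \<Longrightarrow> y \<in> S \<Longrightarrow> F (\<lambda>w. x w + y w) = F x + F y"
  by (simp add: lin_M_def)

lemma lin_M_sum_list:
  assumes F: "lin_M \<iota> lm S F" and S: "fun_subspace S" and r: "\<forall>a\<in>set L. r a \<in> S"
  shows "F (\<lambda>w. \<Sum>a\<leftarrow>L. c a * r a w) = (\<Sum>a\<leftarrow>L. lm (\<iota> (c a)) (F (r a)))"
  using r
proof (induction L)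
  case Nil
  show ?case using lin_M_add[OF F fun_subspace_zero[OF S] fun_subspace_zero[OF S]] by simp
next
  case (Cons a L)
  have "(\<lambda>w. c a * r a w) \<in> S" "(\<lambda>w. \<Sum>a\<leftarrow>L. c a * r a w) \<in> S"
    using Cons.prems fun_subspace_sum_list[OF S] fun_subspace_sum_list[OF S, of "[a]"] by auto
  then show ?case using F Cons unfolding lin_M_def by simp
qed

lemma lin_M_left_action:
  assumes "kalg \<iota>" "bimod \<iota> lm rm" "lin_A \<iota> S f"
  shows "lin_M \<iota> lm S (\<lambda>t. lm (a * f t * a') m)"
proof -
  have "a * (\<iota> c * f x) * a' = \<iota> c * (a * f x * a')" for c x
    using assms(1) unfolding kalg_def by (metis mult.assoc)
  then show ?thesis
    using assms(2,3) unfolding lin_M_def lin_A_def bimod_def by (simp add: algebra_simps)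
qed

lemma lin_M_right_action:
  assumes \<iota>: "kalg \<iota>" and M: "bimod \<iota> lm rm" and f: "lin_A \<iota> S f"
  shows "lin_M \<iota> lm S (\<lambda>t. lm a0 (rm m (a * f t * a')))"
  unfolding lin_M_def
proof (intro conjI ballI allI)
  fix x y assume "x \<in> S" "y \<in> S"
  then show "lm a0 (rm m (a * f (\<lambda>w. x w + y w) * a'))
      = lm a0 (rm m (a * f x * a')) + lm a0 (rm m (a * f y * a'))"
    using f M unfolding lin_A_def bimod_def by (simp add: distrib_left distrib_right)
next
  fix c x assume "x \<in> S"
  then have "a * f (\<lambda>w. c * x w) * a' = \<iota> c * (a * f x * a')"
    using f \<iota> unfolding lin_A_def kalg_def by (metis mult.assoc)
  moreover have "rm m (\<iota> c * b) = lm (\<iota> c) (rm m b)" for b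
    using M unfolding bimod_def by metis
  moreover have "lm a0 (lm (\<iota> c) v) = lm (\<iota> c) (lm a0 v)" for v
    using M \<iota> unfolding bimod_def kalg_def by metis
  ultimately show "lm a0 (rm m (a * f (\<lambda>w. c * x w) * a')) = lm (\<iota> c) (lm a0 (rm m (a * f x * a')))"
    by simp
qed

lemma MT_mt: "x \<in> S \<Longrightarrow> mt \<iota> lm m x \<in> MT \<iota> lm S"
  unfolding MT_def by (intro CollectI exI[of _ "[(m, x)]"]) auto

lemma MT_zero: "(\<lambda>_. 0) \<in> MT \<iota> lm S"
  unfolding MT_def by (intro CollectI exI[of _ "[]"]) auto

lemma MT_add:
  assumes "z \<in> MT \<iota> lm S" "z' \<in> MT \<iota> lm S"
  shows "(\<lambda>w. z w + z' w) \<in> MT \<iota> lm S"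
proof -
  obtain L L' where "\<forall>(m, x)\<in>set L. x \<in> S" "z = (\<lambda>w. \<Sum>(m, x)\<leftarrow>L. mt \<iota> lm m x w)"
    "\<forall>(m, x)\<in>set L'. x \<in> S" "z' = (\<lambda>w. \<Sum>(m, x)\<leftarrow>L'. mt \<iota> lm m x w)"
    using assms unfolding MT_def by blast
  then show ?thesis unfolding MT_def by (intro CollectI exI[of _ "L @ L'"]) auto
qed

lemma lin_Mk_add:
  "lin_Mk \<iota> lm S \<phi> \<Longrightarrow> z \<in> S \<Longrightarrow> z' \<in> S \<Longrightarrow> \<phi> (\<lambda>w. z w + z' w) = \<phi> z + \<phi> z'"
  by (simp add: lin_Mk_def)

lemma lin_Mk_zero:
  assumes "lin_Mk \<iota> lm (MT \<iota> lm S) \<phi>" shows "\<phi> (\<lambda>_. 0) = 0"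
proof -
  have "\<phi> (\<lambda>_. 0) = \<phi> (\<lambda>_. 0) + \<phi> (\<lambda>_. 0)"
    using lin_Mk_add[OF assms MT_zero MT_zero] by (simp only: add_0)
  then show ?thesis by (metis add_cancel_left_right)
qed

lemma lin_Mk_uminus:
  assumes \<phi>: "lin_Mk \<iota> lm S \<phi>" and "z \<in> S" "kalg \<iota>" "bimod \<iota> lm rm"
  shows "\<phi> (\<lambda>w. - z w) = - \<phi> z"
proof -
  have "\<phi> (\<lambda>w. lm (\<iota> (- 1)) (z w)) = - 1 * \<phi> z"
    using \<phi> \<open>z \<in> S\<close> unfolding lin_Mk_def by blast
  then show ?thesis
    using kalg_minus_one[OF \<open>kalg \<iota>\<close>] bimod_lm_minus_one[OF \<open>bimod \<iota> lm rm\<close>] by simp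
qed

lemma MT_sum_list: "\<forall>a\<in>set L. g a \<in> MT \<iota> lm S \<Longrightarrow> (\<lambda>w. \<Sum>a\<leftarrow>L. g a w) \<in> MT \<iota> lm S"
  by (induction L) (auto intro: MT_zero MT_add)

lemma lin_Mk_sum_list:
  assumes "lin_Mk \<iota> lm (MT \<iota> lm S) \<phi>" "\<forall>a\<in>set L. g a \<in> MT \<iota> lm S"
  shows "\<phi> (\<lambda>w. \<Sum>a\<leftarrow>L. g a w) = (\<Sum>a\<leftarrow>L. \<phi> (g a))"
  using assms(2)
  by (induction L) (simp_all add: lin_Mk_zero[OF assms(1)] lin_Mk_add[OF assms(1)] MT_sum_list)

lemma MT_sum: "finite A \<Longrightarrow> \<forall>a\<in>A. g a \<in> MT \<iota> lm S \<Longrightarrow> (\<lambda>w. \<Sum>a\<in>A. g a w) \<in> MT \<iota> lm S"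
  by (induction A rule: finite_induct) (auto intro: MT_zero MT_add)

lemma lin_Mk_sum:
  assumes "lin_Mk \<iota> lm (MT \<iota> lm S) \<phi>" "finite A" "\<forall>a\<in>A. g a \<in> MT \<iota> lm S"
  shows "\<phi> (\<lambda>w. \<Sum>a\<in>A. g a w) = (\<Sum>a\<in>A. \<phi> (g a))"
  using assms(2,3)
  by (induction A rule: finite_induct)
    (simp_all add: lin_Mk_zero[OF assms(1)] lin_Mk_add[OF assms(1)] MT_sum)

lemma lin_Mk_negp:
  assumes "lin_Mk \<iota> lm S \<phi>" "z \<in> S" "kalg \<iota>" "bimod \<iota> lm rm"
  shows "\<phi> (\<lambda>w. negp n (z w)) = (- 1) ^ n * \<phi> z"
  using lin_Mk_uminus[OF assms] by (cases "even n") (simp_all add: negp_def)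

lemma lin_Mk_double_sum:
  assumes \<phi>: "lin_Mk \<iota> lm (MT \<iota> lm S) \<phi>" and A: "finite A" and B: "\<forall>a\<in>A. finite (B a)"
    and G: "\<forall>a\<in>A. \<forall>b\<in>B a. G b \<in> MT \<iota> lm S"
  shows "(\<lambda>w. \<Sum>a\<in>A. \<Sum>b\<in>B a. G b w) \<in> MT \<iota> lm S
    \<and> \<phi> (\<lambda>w. \<Sum>a\<in>A. \<Sum>b\<in>B a. G b w) = (\<Sum>a\<in>A. \<Sum>b\<in>B a. \<phi> (G b))"
proof -
  have inner: "\<forall>a\<in>A. (\<lambda>w. \<Sum>b\<in>B a. G b w) \<in> MT \<iota> lm S" using B G MT_sum by blast
  have "\<phi> (\<lambda>w. \<Sum>a\<in>A. \<Sum>b\<in>B a. G b w) = (\<Sum>a\<in>A. \<phi> (\<lambda>w. \<Sum>b\<in>B a. G b w))"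
    using lin_Mk_sum[OF \<phi> A inner] .
  also have "\<dots> = (\<Sum>a\<in>A. \<Sum>b\<in>B a. \<phi> (G b))"
  proof (rule sum.cong)
    fix a assume "a \<in> A"
    then show "\<phi> (\<lambda>w. \<Sum>b\<in>B a. G b w) = (\<Sum>b\<in>B a. \<phi> (G b))"
      using lin_Mk_sum[OF \<phi>, of "B a" G] B G by blast
  qed simp
  finally show ?thesis using MT_sum[OF A inner] by blast
qed

lemma finite_index_pairs: "finite {(i, j). i + j \<le> (K::nat)}"
  by (rule finite_subset[of _ "{0..K} \<times> {0..K}"]) auto

section \<open>Contracting eta(phi) against a slice\<close>

lemma eta_contraction:
  assumes \<iota>: "kalg \<iota>" and M: "bimod \<iota> lm rm"
    and Sa: "Sa \<subseteq> tens la" and Sb: "fun_subspace Sb"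
    and F: "lin_M \<iota> lm Sb F" and \<phi>: "lin_Mk \<iota> lm (MT \<iota> lm Sa) \<phi>"
    and L: "\<forall>(h, t)\<in>set L. h \<in> Sa \<and> t \<in> Sb"
  defines "G \<equiv> \<lambda>e. if length e = la then F (\<lambda>s. \<Sum>(h, t)\<leftarrow>L. h e * t s) else 0"
  shows "G \<in> MT \<iota> lm Sa \<and> \<phi> G = (\<Sum>(h, t)\<leftarrow>L. eta \<iota> lm \<phi> h (F t))"
proof -
  \<comment> \<open>\<open>G\<close> is the element \<open>\<Sum>\<^sub>k h\<^sub>k \<otimes> F t\<^sub>k\<close> of \<open>M \<otimes> Sa\<close>\<close>
  have G_mt: "G e = (\<Sum>(h, t)\<leftarrow>L. mt \<iota> lm (F t) h e)" for e
  proof (cases "length e = la")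
    case True
    then show ?thesis
      using lin_M_sum_list[OF F Sb, of L "\<lambda>(h, t). t" "\<lambda>(h, t). h e"] L
      by (simp add: G_def mt_def case_prod_unfold)
  next
    case False
    then have "\<forall>(h, t)\<in>set L. mt \<iota> lm (F t) h e = 0"
      using L Sa tens_eq_0 kalg_zero[OF \<iota>] bimod_lm_zero[OF M] by (fastforce simp: mt_def)
    then have "(\<Sum>(h, t)\<leftarrow>L. mt \<iota> lm (F t) h e) = 0" by (induction L) auto
    with False show ?thesis by (simp add: G_def)
  qed
  then have G: "G = (\<lambda>e. \<Sum>a\<leftarrow>L. (case a of (h, t) \<Rightarrow> mt \<iota> lm (F t) h) e)"
    by (simp add: fun_eq_iff case_prod_unfold)
  have mt_MT: "\<forall>a\<in>set L. (case a of (h, t) \<Rightarrow> mt \<iota> lm (F t) h) \<in> MT \<iota> lm Sa"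
    using L MT_mt by fastforce
  show ?thesis
    unfolding G using MT_sum_list[OF mt_MT] lin_Mk_sum_list[OF \<phi> mt_MT]
    by (simp add: eta_def case_prod_unfold)
qed

lemma contract2_eq_sum_list:
  assumes "\<exists>L. (\<forall>(h, t)\<in>set L. h \<in> Sa \<and> t \<in> Sb)
    \<and> y = (\<lambda>w. \<Sum>(h, t)\<leftarrow>L. h (take la w) * t (drop la w))"
  obtains L where "\<forall>(h, t)\<in>set L. h \<in> Sa \<and> t \<in> Sb"
    and "y = (\<lambda>w. \<Sum>(h, t)\<leftarrow>L. h (take la w) * t (drop la w))"
    and "contract2 la Sa Sb \<beta> y = (\<Sum>(h, t)\<leftarrow>L. \<beta> h t)"
proof -
  let ?L = "SOME L. (\<forall>(h, t)\<in>set L. h \<in> Sa \<and> t \<in> Sb)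
    \<and> y = (\<lambda>w. \<Sum>(h, t)\<leftarrow>L. h (take la w) * t (drop la w))"
  have "contract2 la Sa Sb \<beta> y = (\<Sum>(h, t)\<leftarrow>?L. \<beta> h t)"
    unfolding contract2_def Let_def ..
  with someI_ex[OF assms] show ?thesis using that by blast
qed

lemma slice_decomposition_eval:
  assumes x: "x \<in> tens n" and len: "length I + la + length C + lb + length J = n"
    and L: "\<forall>(h, t)\<in>set L. h \<in> tens la \<and> t \<in> tens lb"
    and y: "(\<lambda>s. x (I @ take la s @ C @ drop la s @ J))
      = (\<lambda>w. \<Sum>(h, t)\<leftarrow>L. h (take la w) * t (drop la w))"
    and uv: "length u = la \<or> length v = lb"
  shows "x (I @ u @ C @ v @ J) = (\<Sum>(h, t)\<leftarrow>L. h u * t v)"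
proof (cases "length u = la \<and> length v = lb")
  case True
  then show ?thesis using fun_cong[OF y, of "u @ v"] by simp
next
  case False
  then have "\<forall>(h, t)\<in>set L. h u * t v = 0" using L uv tens_eq_0 by fastforce
  then have "(\<Sum>(h, t)\<leftarrow>L. h u * t v) = 0" by (induction L) auto
  moreover have "x (I @ u @ C @ v @ J) = 0" using False uv len tens_eq_0[OF x] by auto
  ultimately show ?thesis by simp
qed

lemma contract2_Wsp_slice:
  assumes SR: "subspace_tens N R" and x: "x \<in> Wsp N R n"
    and len: "length I + la + length C + lb + length J = n"
  obtains L where "\<forall>(h, t)\<in>set L. h \<in> Wsp N R la \<and> t \<in> Wsp N R lb"
    and "\<forall>u v. length u = la \<or> length v = lb \<longrightarrow> x (I @ u @ C @ v @ J) = (\<Sum>(h, t)\<leftarrow>L. h u * t v)"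
    and "contract2 la (Wsp N R la) (Wsp N R lb) \<beta> (\<lambda>s. x (I @ take la s @ C @ drop la s @ J))
      = (\<Sum>(h, t)\<leftarrow>L. \<beta> h t)"
proof -
  obtain L where L: "\<forall>(h, t)\<in>set L. h \<in> Wsp N R la \<and> t \<in> Wsp N R lb"
    and y: "(\<lambda>s. x (I @ take la s @ C @ drop la s @ J))
      = (\<lambda>w. \<Sum>(h, t)\<leftarrow>L. h (take la w) * t (drop la w))"
    and "contract2 la (Wsp N R la) (Wsp N R lb) \<beta> (\<lambda>s. x (I @ take la s @ C @ drop la s @ J))
      = (\<Sum>(h, t)\<leftarrow>L. \<beta> h t)"
    by (rule contract2_eq_sum_list[OF Wsp_slice_decomposition[OF SR x len]])
  moreover have "\<forall>(h, t)\<in>set L. h \<in> tens la \<and> t \<in> tens lb" using L Wsp_subset_tens by fastforce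
  ultimately show ?thesis
    using that slice_decomposition_eval[OF subsetD[OF Wsp_subset_tens x] len _ y] by blast
qed

lemma contract2_slice_left:
  assumes \<iota>: "kalg \<iota>" and M: "bimod \<iota> lm rm" and SR: "subspace_tens N R"
    and x: "x \<in> Wsp N R n" and len: "length I + la + length C + lb + length J = n"
    and F: "lin_M \<iota> lm (Wsp N R lb) F" and \<phi>: "lin_Mk \<iota> lm (MT \<iota> lm (Wsp N R la)) \<phi>"
  defines "G \<equiv> \<lambda>e. if length e = la then F (\<lambda>s. x (I @ e @ C @ s @ J)) else 0"
  shows "G \<in> MT \<iota> lm (Wsp N R la) \<and> contract2 la (Wsp N R la) (Wsp N R lb)
      (\<lambda>h t. eta \<iota> lm \<phi> h (F t)) (\<lambda>s. x (I @ take la s @ C @ drop la s @ J)) = \<phi> G"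
proof -
  obtain L where L: "\<forall>(h, t)\<in>set L. h \<in> Wsp N R la \<and> t \<in> Wsp N R lb"
    and ev: "\<forall>u v. length u = la \<or> length v = lb \<longrightarrow> x (I @ u @ C @ v @ J) = (\<Sum>(h, t)\<leftarrow>L. h u * t v)"
    and c: "contract2 la (Wsp N R la) (Wsp N R lb) (\<lambda>h t. eta \<iota> lm \<phi> h (F t))
      (\<lambda>s. x (I @ take la s @ C @ drop la s @ J)) = (\<Sum>(h, t)\<leftarrow>L. eta \<iota> lm \<phi> h (F t))"
    by (rule contract2_Wsp_slice[OF SR x len, where \<beta> = "\<lambda>h t. eta \<iota> lm \<phi> h (F t)"])
  have "G = (\<lambda>e. if length e = la then F (\<lambda>s. \<Sum>(h, t)\<leftarrow>L. h e * t s) else 0)"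
    by (intro ext) (simp add: G_def ev split: if_split)
  then show ?thesis
    using eta_contraction[OF \<iota> M Wsp_subset_tens Wsp_subspace[OF SR] F \<phi> L] c by simp
qed

lemma contract2_slice_right:
  assumes \<iota>: "kalg \<iota>" and M: "bimod \<iota> lm rm" and SR: "subspace_tens N R"
    and x: "x \<in> Wsp N R n" and len: "length I + la + length C + lb + length J = n"
    and F: "lin_M \<iota> lm (Wsp N R la) F" and \<phi>: "lin_Mk \<iota> lm (MT \<iota> lm (Wsp N R lb)) \<phi>"
  defines "G \<equiv> \<lambda>e. if length e = lb then F (\<lambda>s. x (I @ s @ C @ e @ J)) else 0"
  shows "G \<in> MT \<iota> lm (Wsp N R lb) \<and> contract2 la (Wsp N R la) (Wsp N R lb)
      (\<lambda>h t. eta \<iota> lm \<phi> t (F h)) (\<lambda>s. x (I @ take la s @ C @ drop la s @ J)) = \<phi> G"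
proof -
  obtain L where L: "\<forall>(h, t)\<in>set L. h \<in> Wsp N R la \<and> t \<in> Wsp N R lb"
    and ev: "\<forall>u v. length u = la \<or> length v = lb \<longrightarrow> x (I @ u @ C @ v @ J) = (\<Sum>(h, t)\<leftarrow>L. h u * t v)"
    and c: "contract2 la (Wsp N R la) (Wsp N R lb) (\<lambda>h t. eta \<iota> lm \<phi> t (F h))
      (\<lambda>s. x (I @ take la s @ C @ drop la s @ J)) = (\<Sum>(h, t)\<leftarrow>L. eta \<iota> lm \<phi> t (F h))"
    by (rule contract2_Wsp_slice[OF SR x len, where \<beta> = "\<lambda>h t. eta \<iota> lm \<phi> t (F h)"])
  have L': "\<forall>(t, h)\<in>set (map prod.swap L). t \<in> Wsp N R lb \<and> h \<in> Wsp N R la" using L by auto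
  have "G = (\<lambda>e. if length e = lb then F (\<lambda>s. \<Sum>(t, h)\<leftarrow>map prod.swap L. t e * h s) else 0)"
    by (intro ext) (simp add: G_def ev comp_def case_prod_unfold mult.commute split: if_split)
  moreover have "(\<Sum>(t, h)\<leftarrow>map prod.swap L. eta \<iota> lm \<phi> t (F h))
      = (\<Sum>(h, t)\<leftarrow>L. eta \<iota> lm \<phi> t (F h))"
    by (simp add: comp_def case_prod_unfold)
  ultimately show ?thesis
    using eta_contraction[OF \<iota> M Wsp_subset_tens Wsp_subspace[OF SR] F \<phi> L'] c by simp
qed

section \<open>Cap products against eta(phi)\<close>

lemma nu_add: "\<not> (odd a \<and> odd b) \<Longrightarrow> nu N a + nu N b = nu N (a + b)"
  by (cases "even a"; cases "even b") (auto simp: nu_def algebra_simps elim!: evenE oddE)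

lemma nu_add_odd: "odd a \<Longrightarrow> odd b \<Longrightarrow> 2 \<le> N \<Longrightarrow> nu N a + nu N b + (N - 2) = nu N (a + b)"
  by (auto simp: nu_def algebra_simps elim!: oddE)

lemma finite_outer3: "x \<in> tens n \<Longrightarrow> finite (outer3 x i l c j)"
  unfolding outer3_def tens_def by simp

lemma outer3_block_lengths:
  assumes "x \<in> tens (la + lb + (N - 2))" and "(I, C, J) \<in> outer3 x i la (N - j - 2 - i) j"
    and "i + j \<le> N - 2"
  shows "length I + la + length C + lb + length J = la + lb + (N - 2)"
  using assms unfolding outer3_def tens_def by auto

context
  fixes N :: nat and R :: "('b list \<Rightarrow> 'k::field) set" and \<iota> :: "'k \<Rightarrow> 'a::ring_1"
    and lm :: "'a \<Rightarrow> 'm::ab_group_add \<Rightarrow> 'm" and rm :: "'m \<Rightarrow> 'a \<Rightarrow> 'm"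
    and p q :: nat and f :: "('b list \<Rightarrow> 'k) \<Rightarrow> 'a" and \<phi> :: "('b list \<Rightarrow> 'm) \<Rightarrow> 'k"
    and x :: "'b list \<Rightarrow> 'k"
  assumes N: "2 \<le> N" and SR: "subspace_tens N R" and \<iota>: "kalg \<iota>" and M: "bimod \<iota> lm rm"
    and pq: "p \<le> q" and f: "lin_A \<iota> (Wsp N R (nu N p)) f"
    and \<phi>: "lin_Mk \<iota> lm (MT \<iota> lm (Wsp N R (nu N (q - p)))) \<phi>" and x: "x \<in> Wsp N R (nu N q)"
begin

lemma cap_left_eta_even:
  assumes even: "\<not> (odd p \<and> odd (q - p))"
  shows "\<phi> (capL N lm rm gen f p q m x) = cupMA N R lm rm gen (eta \<iota> lm \<phi>) (q - p) f p x m"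
proof -
  have "length [] + nu N (q - p) + length [] + nu N p + length [] = nu N q"
    using nu_add[of "q - p" p N] even pq by auto
  note slice = contract2_slice_left[OF \<iota> M SR x this lin_M_left_action[OF \<iota> M f, of 1 1 m] \<phi>]
  have "capL N lm rm gen f p q m x
      = (\<lambda>e. if length e = nu N (q - p) then lm (f (\<lambda>s. x (e @ s))) m else 0)"
    unfolding capL_def if_P[OF even] by auto
  moreover have even': "\<not> (odd (q - p) \<and> odd p)" using even by blast
  have "cupMA N R lm rm gen (eta \<iota> lm \<phi>) (q - p) f p x m = contract2 (nu N (q - p))
      (Wsp N R (nu N (q - p))) (Wsp N R (nu N p)) (\<lambda>h t. eta \<iota> lm \<phi> h (lm (f t) m)) x"
    unfolding cupMA_def Let_def if_P[OF even'] ..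
  ultimately show ?thesis using slice by (simp cong: if_cong)
qed

lemma cap_left_eta_odd:
  assumes odd: "odd p \<and> odd (q - p)"
  shows "\<phi> (capL N lm rm gen f p q m x) = cupMA N R lm rm gen (eta \<iota> lm \<phi>) (q - p) f p x m"
proof -
  let ?A = "{(i, j). i + j \<le> N - 2}"
  let ?B = "\<lambda>(i, j). outer3 x i (nu N (q - p)) (N - j - 2 - i) j"
  define G where "G = (\<lambda>(I, C, J) e. if length e = nu N (q - p)
    then lm (gw gen C * f (\<lambda>s. x (I @ e @ C @ s @ J)) * gw gen J) (rm m (gw gen I)) else 0)"
  have nq: "nu N (q - p) + nu N p + (N - 2) = nu N q"
    using nu_add_odd[of "q - p" p N] odd N pq by simp
  then have xt: "x \<in> tens (nu N (q - p) + nu N p + (N - 2))" using x Wsp_subset_tens by auto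
  have slice: "G (I, C, J) \<in> MT \<iota> lm (Wsp N R (nu N (q - p))) \<and> \<phi> (G (I, C, J)) =
      contract2 (nu N (q - p)) (Wsp N R (nu N (q - p))) (Wsp N R (nu N p))
        (\<lambda>h t. eta \<iota> lm \<phi> h (lm (gw gen C * f t * gw gen J) (rm m (gw gen I))))
        (\<lambda>s. x (I @ take (nu N (q - p)) s @ C @ drop (nu N (q - p)) s @ J))"
    if "(i, j) \<in> ?A" "(I, C, J) \<in> outer3 x i (nu N (q - p)) (N - j - 2 - i) j" for i j I C J
  proof -
    have "length I + nu N (q - p) + length C + nu N p + length J = nu N q"
      using outer3_block_lengths[OF xt that(2)] that(1) nq by simp
    from contract2_slice_left[OF \<iota> M SR x this lin_M_left_action[OF \<iota> M f] \<phi>]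
    show ?thesis by (simp add: G_def)
  qed
  have "\<forall>a\<in>?A. \<forall>b\<in>?B a. G b \<in> MT \<iota> lm (Wsp N R (nu N (q - p)))" using slice by fast
  note sums = lin_Mk_double_sum[OF \<phi> finite_index_pairs _ this] finite_outer3[OF xt]
  have "capL N lm rm gen f p q m x = (\<lambda>e. - (\<Sum>a\<in>?A. \<Sum>b\<in>?B a. G b e))"
    using odd by (auto simp: capL_def G_def case_prod_unfold fun_eq_iff)
  then have "\<phi> (capL N lm rm gen f p q m x) = - (\<Sum>a\<in>?A. \<Sum>b\<in>?B a. \<phi> (G b))"
    using sums lin_Mk_uminus[OF \<phi> _ \<iota> M] by auto
  also have "\<dots> = cupMA N R lm rm gen (eta \<iota> lm \<phi>) (q - p) f p x m"
    using slice odd by (auto simp: cupMA_def Let_def intro!: sum.cong)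
  finally show ?thesis .
qed

lemma cap_right_eta_even:
  assumes even: "\<not> (odd p \<and> odd (q - p))"
  shows "\<phi> (capR N lm rm gen f p q m x)
    = (- 1) ^ p * cupAM N R lm rm gen f p (eta \<iota> lm \<phi>) (q - p) x m"
proof -
  have "length [] + nu N p + length [] + nu N (q - p) + length [] = nu N q"
    using nu_add[of p "q - p" N] even pq by auto
  note slice = contract2_slice_right[OF \<iota> M SR x this lin_M_right_action[OF \<iota> M f, of 1 m 1 1] \<phi>]
  have "even (p * q) \<longleftrightarrow> even p"
    using even pq odd_add[of p "q - p"] by auto
  then have "capR N lm rm gen f p q m x
      = (\<lambda>e. negp p (if length e = nu N (q - p) then rm m (f (\<lambda>s. x (s @ e))) else 0))"
    unfolding capR_def if_P[OF even] by (auto simp: negp_def)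
  moreover have "cupAM N R lm rm gen f p (eta \<iota> lm \<phi>) (q - p) x m = contract2 (nu N p)
      (Wsp N R (nu N p)) (Wsp N R (nu N (q - p))) (\<lambda>h t. eta \<iota> lm \<phi> t (rm m (f h))) x"
    unfolding cupAM_def Let_def if_P[OF even] ..
  ultimately show ?thesis
    using slice lin_Mk_negp[OF \<phi> _ \<iota> M] bimod_lm_one[OF M] by (simp cong: if_cong)
qed

lemma cap_right_eta_odd:
  assumes odd: "odd p \<and> odd (q - p)"
  shows "\<phi> (capR N lm rm gen f p q m x)
    = (- 1) ^ p * cupAM N R lm rm gen f p (eta \<iota> lm \<phi>) (q - p) x m"
proof -
  let ?A = "{(i, j). i + j \<le> N - 2}"
  let ?B = "\<lambda>(i, j). outer3 x i (nu N p) (N - j - 2 - i) j"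
  define G where "G = (\<lambda>(I, C, J) e. if length e = nu N (q - p)
    then lm (gw gen J) (rm m (gw gen I * f (\<lambda>s. x (I @ s @ C @ e @ J)) * gw gen C)) else 0)"
  have nq: "nu N p + nu N (q - p) + (N - 2) = nu N q"
    using nu_add_odd[of p "q - p" N] odd N pq by simp
  then have xt: "x \<in> tens (nu N p + nu N (q - p) + (N - 2))" using x Wsp_subset_tens by auto
  have slice: "G (I, C, J) \<in> MT \<iota> lm (Wsp N R (nu N (q - p))) \<and> \<phi> (G (I, C, J)) =
      contract2 (nu N p) (Wsp N R (nu N p)) (Wsp N R (nu N (q - p)))
        (\<lambda>h t. eta \<iota> lm \<phi> t (lm (gw gen J) (rm m (gw gen I * f h * gw gen C))))
        (\<lambda>s. x (I @ take (nu N p) s @ C @ drop (nu N p) s @ J))"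
    if "(i, j) \<in> ?A" "(I, C, J) \<in> outer3 x i (nu N p) (N - j - 2 - i) j" for i j I C J
  proof -
    have "length I + nu N p + length C + nu N (q - p) + length J = nu N q"
      using outer3_block_lengths[OF xt that(2)] that(1) nq by simp
    from contract2_slice_right[OF \<iota> M SR x this lin_M_right_action[OF \<iota> M f] \<phi>]
    show ?thesis by (simp add: G_def)
  qed
  have "\<forall>a\<in>?A. \<forall>b\<in>?B a. G b \<in> MT \<iota> lm (Wsp N R (nu N (q - p)))" using slice by fast
  note sums = lin_Mk_double_sum[OF \<phi> finite_index_pairs _ this] finite_outer3[OF xt]
  have "capR N lm rm gen f p q m x = (\<lambda>e. \<Sum>a\<in>?A. \<Sum>b\<in>?B a. G b e)"
    using odd by (auto simp: capR_def G_def case_prod_unfold fun_eq_iff)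
  then have "\<phi> (capR N lm rm gen f p q m x) = (\<Sum>a\<in>?A. \<Sum>b\<in>?B a. \<phi> (G b))"
    using sums by auto
  also have "\<dots> = (- 1) ^ p * cupAM N R lm rm gen f p (eta \<iota> lm \<phi>) (q - p) x m"
    using slice odd by (auto simp: cupAM_def Let_def intro!: sum.cong)
  finally show ?thesis .
qed

lemma cap_left_eta:
  "\<phi> (capL N lm rm gen f p q m x) = cupMA N R lm rm gen (eta \<iota> lm \<phi>) (q - p) f p x m"
  using cap_left_eta_even cap_left_eta_odd by blast

lemma cap_right_eta:
  "\<phi> (capR N lm rm gen f p q m x)
    = (- 1) ^ p * cupAM N R lm rm gen f p (eta \<iota> lm \<phi>) (q - p) x m"
  using cap_right_eta_even cap_right_eta_odd by blast

end

theorem proposition4p2: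
  fixes N :: nat and R :: "('b list \<Rightarrow> 'k::field) set"
    and \<iota> :: "'k \<Rightarrow> 'a::ring_1" and gen :: "'b \<Rightarrow> 'a"
    and lm :: "'a \<Rightarrow> 'm::ab_group_add \<Rightarrow> 'm" and rm :: "'m \<Rightarrow> 'a \<Rightarrow> 'm"
    and p q :: nat and f :: "('b list \<Rightarrow> 'k) \<Rightarrow> 'a" and \<phi> :: "('b list \<Rightarrow> 'm) \<Rightarrow> 'k"
  assumes "N \<ge> 2"
    and "subspace_tens N R"
    and "presents N R \<iota> gen"
    and "bimod \<iota> lm rm"
    and "p \<le> q"
    and "lin_A \<iota> (Wsp N R (nu N p)) f"
    and "lin_Mk \<iota> lm (MT \<iota> lm (Wsp N R (nu N (q - p)))) \<phi>"
  shows "(\<forall>x\<in>Wsp N R (nu N q). \<forall>m.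
            \<phi> (capL N lm rm gen f p q m x)
              = cupMA N R lm rm gen (eta \<iota> lm \<phi>) (q - p) f p x m)
       \<and> (\<forall>x\<in>Wsp N R (nu N q). \<forall>m.
            \<phi> (capR N lm rm gen f p q m x)
              = (-1) ^ p * cupAM N R lm rm gen f p (eta \<iota> lm \<phi>) (q - p) x m)"
proof -
  have \<iota>: "kalg \<iota>" using assms(3) unfolding presents_def by blast
  show ?thesis
    using cap_left_eta[OF assms(1,2) \<iota> assms(4-7)] cap_right_eta[OF assms(1,2) \<iota> assms(4-7)]
    by blast
qed

end
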